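(* Let $G$ be a topological group, $m\in\mathbb N\cup\{\infty\}$, $\rho\colon G\to\mathrm{Isom}(\mathbf H^m_{\mathbb C})_o$ a representation, and suppose some $x\in\mathbf H^m_{\mathbb C}$ has total orbit. If $\rho(G)$ fixes a point of $\partial\mathbf H^m_{\mathbb C}$, then $\rho$ admits an orbitally continuous lift $\tilde\rho\colon G\to U(1,m)$ which is a homomorphism.
   Context: $\mathbf H^m_{\mathbb C}$ is the projectivization of the positive vectors of a separable complex Hilbert space with a strongly non-degenerate Hermitian form $B$ of signature $(1,m)$, with $\cosh d([v],[w])=|B(v,w)|/\sqrt{B(v,v)B(w,w)}$; its boundary is the set of isotropic lines; $U(1,m)$ is the $B$-unitary group and $\mathrm{Isom}(\mathbf H^m_{\mathbb C})_o=PU(1,m)$. A representation is an orbitally continuous homomorphism. A subset of $\mathbf H^m_{\mathbb C}$ is total if no proper closed complex subspace contains lifts of all its points. *)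

theory Defs
  imports "HOL-Analysis.Analysis" "HOL-Algebra.Group" "HOL-Library.Extended_Nat"
begin

text \<open>Standard model of a separable complex Hilbert space with a strongly non-degenerate
Hermitian form of signature (1,m), m a natural number or infinity:
vectors are square-summable sequences v : nat => complex, coordinate 0 is the
timelike one, coordinates 1..m are spacelike (v i = 0 for i > m).\<close>

type_synonym cvec = "nat \<Rightarrow> complex"

definition Vm :: "enat \<Rightarrow> cvec set" where
  "Vm m = {v. (\<forall>i. m < enat i \<longrightarrow> v i = 0) \<and> summable (\<lambda>i. (cmod (v i))\<^sup>2)}"

definition vadd :: "cvec \<Rightarrow> cvec \<Rightarrow> cvec" where
  "vadd v w = (\<lambda>i. v i + w i)"

definition vscale :: "complex \<Rightarrow> cvec \<Rightarrow> cvec" where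
  "vscale c v = (\<lambda>i. c * v i)"

definition vzero :: cvec where
  "vzero = (\<lambda>i. 0)"

definition l2dist :: "cvec \<Rightarrow> cvec \<Rightarrow> real" where
  "l2dist v w = sqrt (\<Sum>i. (cmod (v i - w i))\<^sup>2)"

definition Bf :: "cvec \<Rightarrow> cvec \<Rightarrow> complex" where
  "Bf v w = v 0 * cnj (w 0) - (\<Sum>i. v (Suc i) * cnj (w (Suc i)))"

text \<open>The complex line spanned by v (a point of the projectivization).\<close>
definition cline :: "cvec \<Rightarrow> cvec set" where
  "cline v = range (\<lambda>c. vscale c v)"

definition hyp :: "enat \<Rightarrow> cvec set set" where
  "hyp m = {cline v | v. v \<in> Vm m \<and> Re (Bf v v) > 0}"

definition bdry :: "enat \<Rightarrow> cvec set set" where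
  "bdry m = {cline v | v. v \<in> Vm m \<and> v \<noteq> vzero \<and> Bf v v = 0}"

definition hdist :: "cvec set \<Rightarrow> cvec set \<Rightarrow> real" where
  "hdist p q = (let v = (SOME v. v \<in> p \<and> v \<noteq> vzero); w = (SOME w. w \<in> q \<and> w \<noteq> vzero)
     in arcosh (cmod (Bf v w) / sqrt (Re (Bf v v) * Re (Bf w w))))"

definition Ugrp :: "enat \<Rightarrow> (cvec \<Rightarrow> cvec) set" where
  "Ugrp m = {A. bij_betw A (Vm m) (Vm m)
      \<and> (\<forall>v\<in>Vm m. \<forall>w\<in>Vm m. A (vadd v w) = vadd (A v) (A w))
      \<and> (\<forall>c. \<forall>v\<in>Vm m. A (vscale c v) = vscale c (A v))
      \<and> (\<forall>v\<in>Vm m. \<forall>w\<in>Vm m. Bf (A v) (A w) = Bf v w)}"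

text \<open>PU(1,m) = Isom(H^m_C)_o, represented by the induced action on points of
H^m_C and of its boundary (lines): an element is a map induced by some A in U(1,m).\<close>
definition PUgrp :: "enat \<Rightarrow> (cvec set \<Rightarrow> cvec set) set" where
  "PUgrp m = {f. \<exists>A\<in>Ugrp m. \<forall>p\<in>hyp m \<union> bdry m. f p = A ` p}"

definition topological_group :: "('g, 'b) monoid_scheme \<Rightarrow> 'g topology \<Rightarrow> bool" where
  "topological_group G T \<longleftrightarrow> group G \<and> topspace T = carrier G
     \<and> continuous_map (prod_topology T T) T (\<lambda>(x, y). x \<otimes>\<^bsub>G\<^esub> y)
     \<and> continuous_map T T (\<lambda>x. inv\<^bsub>G\<^esub> x)"

definition is_rep :: "('g, 'b) monoid_scheme \<Rightarrow> 'g topology \<Rightarrow> enat \<Rightarrow> ('g \<Rightarrow> cvec set \<Rightarrow> cvec set) \<Rightarrow> bool" where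
  "is_rep G T m \<rho> \<longleftrightarrow>
     (\<forall>g\<in>carrier G. \<rho> g \<in> PUgrp m)
   \<and> (\<forall>g\<in>carrier G. \<forall>h\<in>carrier G. \<forall>p\<in>hyp m \<union> bdry m. \<rho> (g \<otimes>\<^bsub>G\<^esub> h) p = \<rho> g (\<rho> h p))
   \<and> (\<forall>p\<in>hyp m. \<forall>g0\<in>carrier G. \<forall>e>0. \<exists>U. openin T U \<and> g0 \<in> U \<and>
        (\<forall>g\<in>U. hdist (\<rho> g p) (\<rho> g0 p) < e))"

definition closed_csubspace :: "enat \<Rightarrow> cvec set \<Rightarrow> bool" where
  "closed_csubspace m W \<longleftrightarrow> W \<subseteq> Vm m \<and> vzero \<in> W
     \<and> (\<forall>v\<in>W. \<forall>w\<in>W. vadd v w \<in> W) \<and> (\<forall>c. \<forall>v\<in>W. vscale c v \<in> W)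
     \<and> (\<forall>v\<in>Vm m. (\<forall>e>0. \<exists>w\<in>W. l2dist v w < e) \<longrightarrow> v \<in> W)"

definition total :: "enat \<Rightarrow> cvec set set \<Rightarrow> bool" where
  "total m S \<longleftrightarrow> (\<forall>W. closed_csubspace m W \<and> (\<forall>p\<in>S. \<exists>v\<in>W. v \<noteq> vzero \<and> cline v = p)
       \<longrightarrow> W = Vm m)"

definition is_lift :: "('g, 'b) monoid_scheme \<Rightarrow> 'g topology \<Rightarrow> enat \<Rightarrow> ('g \<Rightarrow> cvec set \<Rightarrow> cvec set) \<Rightarrow> ('g \<Rightarrow> cvec \<Rightarrow> cvec) \<Rightarrow> bool" where
  "is_lift G T m \<rho> \<rho>' \<longleftrightarrow>
     (\<forall>g\<in>carrier G. \<rho>' g \<in> Ugrp m)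
   \<and> (\<forall>g\<in>carrier G. \<forall>p\<in>hyp m \<union> bdry m. \<rho>' g ` p = \<rho> g p)
   \<and> (\<forall>g\<in>carrier G. \<forall>h\<in>carrier G. \<forall>v\<in>Vm m. \<rho>' (g \<otimes>\<^bsub>G\<^esub> h) v = \<rho>' g (\<rho>' h v))
   \<and> (\<forall>v\<in>Vm m. \<forall>g0\<in>carrier G. \<forall>e>0. \<exists>U. openin T U \<and> g0 \<in> U \<and>
        (\<forall>g\<in>U. l2dist (\<rho>' g v) (\<rho>' g0 v) < e))"

end

theory Submission
  imports Defs
begin

text \<open>Each \<rho> g is induced by a B-unitary map, unique up to a unimodular scalar. If \<rho>(G) fixes
  the isotropic line [n], every such lift has n as an eigenvector, and rescaling by the phase of the
  eigenvalue gives the unique lift whose eigenvalue on n is a positive real. Uniqueness makes these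
  normalized lifts a homomorphism. For continuity, the pairing B(lift g y, n) is a positive multiple
  of B(y, n) \<noteq> 0; hence when [lift g y] converges to [lift g0 y] in the hyperbolic metric, the
  component of lift g y B-orthogonal to lift g0 y tends to 0 and the remaining coefficient tends
  to 1, so lift g y converges to lift g0 y in norm. Writing an arbitrary vector as a timelike vector
  plus a multiple of e0 extends this from timelike vectors to all vectors.\<close>

definition l2 :: "cvec set" where
  "l2 = {v. summable (\<lambda>i. (cmod (v i))\<^sup>2)}"

definition l2_norm_sq :: "cvec \<Rightarrow> real" where
  "l2_norm_sq v = (\<Sum>i. (cmod (v i))\<^sup>2)"

definition l2_inner :: "cvec \<Rightarrow> cvec \<Rightarrow> complex" where
  "l2_inner v w = (\<Sum>i. v i * cnj (w i))"

definition vtail :: "cvec \<Rightarrow> cvec" where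
  "vtail v = (\<lambda>i. v (Suc i))"

definition vdiff :: "cvec \<Rightarrow> cvec \<Rightarrow> cvec" where
  "vdiff v w = (\<lambda>i. v i - w i)"

definition e0 :: cvec where
  "e0 = (\<lambda>i. if i = 0 then 1 else 0)"

lemma vscale_vscale: "vscale a (vscale b v) = vscale (a * b) v"
  by (simp add: vscale_def mult.assoc)

lemma vscale_one: "vscale 1 v = v"
  by (simp add: vscale_def)

lemma vscale_zero: "vscale 0 v = vzero"
  by (simp add: vscale_def vzero_def)

lemma vscale_vadd: "vscale c (vadd v w) = vadd (vscale c v) (vscale c w)"
  by (simp add: vscale_def vadd_def algebra_simps)

lemma vdiff_eq_vadd: "vdiff v w = vadd v (vscale (-1) w)"
  by (simp add: vdiff_def vadd_def vscale_def)

lemma vtail_vadd: "vtail (vadd v w) = vadd (vtail v) (vtail w)"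
  by (simp add: vtail_def vadd_def)

lemma vtail_vscale: "vtail (vscale c v) = vscale c (vtail v)"
  by (simp add: vtail_def vscale_def)

lemma l2dist_eq_sqrt_l2_norm_sq: "l2dist v w = sqrt (l2_norm_sq (vdiff v w))"
  by (simp add: l2dist_def l2_norm_sq_def vdiff_def)

lemma norm_add_sq_le:
  fixes a b :: "'a :: real_normed_vector"
  shows "(norm (a + b))\<^sup>2 \<le> 2 * (norm a)\<^sup>2 + 2 * (norm b)\<^sup>2"
proof -
  have "(norm (a + b))\<^sup>2 \<le> (norm a + norm b)\<^sup>2"
    by (simp add: norm_triangle_ineq power_mono)
  also have "\<dots> \<le> 2 * (norm a)\<^sup>2 + 2 * (norm b)\<^sup>2"
    using zero_le_power2[of "norm a - norm b"] unfolding power2_diff power2_sum by linarith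
  finally show ?thesis .
qed

lemma Vm_l2: "v \<in> Vm m \<Longrightarrow> v \<in> l2"
  by (simp add: Vm_def l2_def)

lemma l2_vadd:
  assumes "v \<in> l2" "w \<in> l2"
  shows "vadd v w \<in> l2"
proof -
  have "summable (\<lambda>i. 2 * (cmod (v i))\<^sup>2 + 2 * (cmod (w i))\<^sup>2)"
    using assms by (intro summable_add summable_mult) (auto simp: l2_def)
  moreover have "norm ((cmod (v i + w i))\<^sup>2) \<le> 2 * (cmod (v i))\<^sup>2 + 2 * (cmod (w i))\<^sup>2" for i
    using norm_add_sq_le[of "v i" "w i"] by simp
  ultimately show ?thesis
    unfolding l2_def vadd_def by (auto intro: summable_comparison_test[of _ "\<lambda>i. 2 * (cmod (v i))\<^sup>2 + 2 * (cmod (w i))\<^sup>2"])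
qed

lemma l2_vscale: "v \<in> l2 \<Longrightarrow> vscale c v \<in> l2"
  by (simp add: l2_def vscale_def norm_mult power_mult_distrib summable_mult)

lemma l2_vtail: "v \<in> l2 \<Longrightarrow> vtail v \<in> l2"
  using summable_Suc_iff[of "\<lambda>i. (cmod (v i))\<^sup>2"] by (simp add: l2_def vtail_def)

lemma l2_vdiff: "v \<in> l2 \<Longrightarrow> w \<in> l2 \<Longrightarrow> vdiff v w \<in> l2"
  by (simp add: vdiff_eq_vadd l2_vadd l2_vscale)

lemma Vm_vadd: "v \<in> Vm m \<Longrightarrow> w \<in> Vm m \<Longrightarrow> vadd v w \<in> Vm m"
  using l2_vadd[of v w] by (auto simp: Vm_def l2_def vadd_def)

lemma Vm_vscale: "v \<in> Vm m \<Longrightarrow> vscale c v \<in> Vm m"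
  using l2_vscale[of v c] by (auto simp: Vm_def l2_def vscale_def)

lemma vzero_Vm: "vzero \<in> Vm m"
  by (simp add: Vm_def vzero_def)

lemma e0_Vm: "e0 \<in> Vm m"
proof -
  have "summable (\<lambda>i. (cmod (e0 i))\<^sup>2)"
    by (rule summable_finite[of "{0}"]) (auto simp: e0_def)
  moreover have "e0 i = 0" if "m < enat i" for i
    using that by (cases "i = 0") (auto simp: e0_def zero_enat_def[symmetric])
  ultimately show ?thesis
    by (auto simp: Vm_def)
qed

lemma summable_l2_norm_mult:
  assumes "v \<in> l2" "w \<in> l2"
  shows "summable (\<lambda>i. cmod (v i) * cmod (w i))"
proof (rule summable_comparison_test)
  show "summable (\<lambda>i. (cmod (v i))\<^sup>2 + (cmod (w i))\<^sup>2)"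
    using assms by (intro summable_add) (auto simp: l2_def)
  have "norm (cmod (v i) * cmod (w i)) \<le> (cmod (v i))\<^sup>2 + (cmod (w i))\<^sup>2" for i
  proof -
    have "2 * cmod (v i) * cmod (w i) \<le> (cmod (v i))\<^sup>2 + (cmod (w i))\<^sup>2"
      using zero_le_power2[of "cmod (v i) - cmod (w i)"] unfolding power2_diff by simp
    moreover have "0 \<le> cmod (v i) * cmod (w i)"
      by simp
    ultimately have "cmod (v i) * cmod (w i) \<le> (cmod (v i))\<^sup>2 + (cmod (w i))\<^sup>2"
      by linarith
    then show ?thesis
      by simp
  qed
  then show "\<exists>N. \<forall>i\<ge>N. norm (cmod (v i) * cmod (w i)) \<le> (cmod (v i))\<^sup>2 + (cmod (w i))\<^sup>2"
    by blast
qed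

lemma summable_l2_inner:
  assumes "v \<in> l2" "w \<in> l2"
  shows "summable (\<lambda>i. norm (v i * cnj (w i)))" "summable (\<lambda>i. v i * cnj (w i))"
  using summable_l2_norm_mult[OF assms] by (simp_all add: norm_mult summable_norm_cancel)

lemma l2_norm_sq_nonneg: "v \<in> l2 \<Longrightarrow> 0 \<le> l2_norm_sq v"
  by (simp add: l2_norm_sq_def l2_def suminf_nonneg)

lemma l2_norm_sq_eq_0:
  assumes "v \<in> l2" "l2_norm_sq v = 0"
  shows "v = vzero"
  using assms suminf_eq_zero_iff[of "\<lambda>i. (cmod (v i))\<^sup>2"]
  by (auto simp: l2_def l2_norm_sq_def vzero_def)

lemma l2_norm_sq_split_head: "v \<in> l2 \<Longrightarrow> l2_norm_sq v = (cmod (v 0))\<^sup>2 + l2_norm_sq (vtail v)"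
  using suminf_split_head[of "\<lambda>i. (cmod (v i))\<^sup>2"] by (simp add: l2_norm_sq_def vtail_def l2_def)

lemma l2_norm_sq_vscale: "v \<in> l2 \<Longrightarrow> l2_norm_sq (vscale c v) = (cmod c)\<^sup>2 * l2_norm_sq v"
  by (simp add: l2_norm_sq_def vscale_def l2_def norm_mult power_mult_distrib suminf_mult)

lemma l2_norm_sq_vadd_le:
  assumes "v \<in> l2" "w \<in> l2"
  shows "l2_norm_sq (vadd v w) \<le> 2 * l2_norm_sq v + 2 * l2_norm_sq w"
proof -
  have sv: "summable (\<lambda>i. 2 * (cmod (v i))\<^sup>2)" and sw: "summable (\<lambda>i. 2 * (cmod (w i))\<^sup>2)"
    using assms by (auto simp: l2_def intro: summable_mult)
  have "l2_norm_sq (vadd v w) \<le> (\<Sum>i. 2 * (cmod (v i))\<^sup>2 + 2 * (cmod (w i))\<^sup>2)"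
    unfolding l2_norm_sq_def vadd_def
    using l2_vadd[OF assms] summable_add[OF sv sw]
    by (intro suminf_le norm_add_sq_le) (auto simp: l2_def vadd_def)
  also have "\<dots> = 2 * l2_norm_sq v + 2 * l2_norm_sq w"
    using assms by (simp add: suminf_add[OF sv sw, symmetric] suminf_mult l2_norm_sq_def l2_def)
  finally show ?thesis .
qed

lemma l2_inner_vadd_left:
  assumes "v \<in> l2" "w \<in> l2" "u \<in> l2"
  shows "l2_inner (vadd v w) u = l2_inner v u + l2_inner w u"
  using suminf_add[OF summable_l2_inner(2)[OF assms(1,3)] summable_l2_inner(2)[OF assms(2,3)]]
  by (simp add: l2_inner_def vadd_def distrib_right)

lemma l2_inner_vscale_left:
  assumes "v \<in> l2" "u \<in> l2"
  shows "l2_inner (vscale c v) u = c * l2_inner v u"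
  using suminf_mult[OF summable_l2_inner(2)[OF assms], of c]
  by (simp add: l2_inner_def vscale_def mult.assoc)

lemma l2_inner_commute:
  assumes "v \<in> l2" "w \<in> l2"
  shows "l2_inner w v = cnj (l2_inner v w)"
  using bounded_linear.suminf[OF bounded_linear_cnj summable_l2_inner(2)[OF assms]]
  by (simp add: l2_inner_def mult.commute)

lemma l2_inner_self:
  assumes "v \<in> l2"
  shows "l2_inner v v = of_real (l2_norm_sq v)"
proof -
  have "(\<lambda>i. of_real ((cmod (v i))\<^sup>2)) sums (of_real (l2_norm_sq v) :: complex)"
    using assms by (intro sums_of_real) (simp add: l2_norm_sq_def l2_def summable_sums)
  moreover have "v i * cnj (v i) = of_real ((cmod (v i))\<^sup>2)" for i
    by (metis complex_norm_square)
  ultimately show ?thesis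
    by (simp only: l2_inner_def sums_unique[symmetric])
qed

lemma l2_inner_Cauchy_Schwarz:
  assumes "v \<in> l2" "w \<in> l2"
  shows "cmod (l2_inner v w) \<le> sqrt (l2_norm_sq v) * sqrt (l2_norm_sq w)"
proof -
  have partial_le: "L2_set (\<lambda>i. cmod (u i)) {..<k} \<le> sqrt (l2_norm_sq u)" if "u \<in> l2" for u k
    using that by (auto simp: L2_set_def l2_norm_sq_def l2_def intro: sum_le_suminf)
  have "cmod (l2_inner v w) \<le> (\<Sum>i. cmod (v i) * cmod (w i))"
    using summable_norm[OF summable_l2_inner(1)[OF assms]] by (simp add: l2_inner_def norm_mult)
  also have "\<dots> \<le> sqrt (l2_norm_sq v) * sqrt (l2_norm_sq w)"
  proof (rule suminf_le_const[OF summable_l2_norm_mult[OF assms]])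
    fix k
    have "(\<Sum>i<k. cmod (v i) * cmod (w i))
          \<le> L2_set (\<lambda>i. cmod (v i)) {..<k} * L2_set (\<lambda>i. cmod (w i)) {..<k}"
      using L2_set_mult_ineq[of "\<lambda>i. cmod (v i)" "\<lambda>i. cmod (w i)" "{..<k}"] by simp
    also have "\<dots> \<le> sqrt (l2_norm_sq v) * sqrt (l2_norm_sq w)"
      using assms by (intro mult_mono partial_le) (auto simp: l2_norm_sq_nonneg)
    finally show "(\<Sum>i<k. cmod (v i) * cmod (w i)) \<le> sqrt (l2_norm_sq v) * sqrt (l2_norm_sq w)" .
  qed
  finally show ?thesis .
qed

lemma tendsto_l2_norm_sq_vadd_0:
  assumes "\<forall>\<^sub>F x in F. a x \<in> l2 \<and> b x \<in> l2"
    and "((\<lambda>x. l2_norm_sq (a x)) \<longlongrightarrow> 0) F" "((\<lambda>x. l2_norm_sq (b x)) \<longlongrightarrow> 0) F"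
  shows "((\<lambda>x. l2_norm_sq (vadd (a x) (b x))) \<longlongrightarrow> 0) F"
proof (rule Lim_null_comparison)
  show "\<forall>\<^sub>F x in F. norm (l2_norm_sq (vadd (a x) (b x))) \<le> 2 * l2_norm_sq (a x) + 2 * l2_norm_sq (b x)"
    using assms(1) by eventually_elim (simp add: l2_norm_sq_nonneg l2_vadd l2_norm_sq_vadd_le)
  have "((\<lambda>x. 2 * l2_norm_sq (a x) + 2 * l2_norm_sq (b x)) \<longlongrightarrow> 2 * 0 + 2 * 0) F"
    by (intro tendsto_intros assms(2,3))
  then show "((\<lambda>x. 2 * l2_norm_sq (a x) + 2 * l2_norm_sq (b x)) \<longlongrightarrow> 0) F"
    by simp
qed

lemma Bf_eq_head_minus_l2_inner: "Bf v w = v 0 * cnj (w 0) - l2_inner (vtail v) (vtail w)"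
  by (simp add: Bf_def l2_inner_def vtail_def)

lemma Bf_vadd_left:
  assumes "v \<in> l2" "w \<in> l2" "u \<in> l2"
  shows "Bf (vadd v w) u = Bf v u + Bf w u"
  unfolding Bf_eq_head_minus_l2_inner vtail_vadd
  using l2_inner_vadd_left[OF l2_vtail[OF assms(1)] l2_vtail[OF assms(2)] l2_vtail[OF assms(3)]]
  by (simp add: vadd_def algebra_simps)

lemma Bf_vscale_left:
  assumes "v \<in> l2" "u \<in> l2"
  shows "Bf (vscale c v) u = c * Bf v u"
  unfolding Bf_eq_head_minus_l2_inner vtail_vscale
  using l2_inner_vscale_left[OF l2_vtail[OF assms(1)] l2_vtail[OF assms(2)]]
  by (simp add: vscale_def algebra_simps)

lemma Bf_commute:
  assumes "v \<in> l2" "w \<in> l2"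
  shows "Bf w v = cnj (Bf v w)"
  using l2_inner_commute[OF l2_vtail[OF assms(1)] l2_vtail[OF assms(2)]]
  by (simp add: Bf_eq_head_minus_l2_inner)

lemma Bf_vadd_right:
  assumes "v \<in> l2" "w \<in> l2" "u \<in> l2"
  shows "Bf u (vadd v w) = Bf u v + Bf u w"
  using Bf_vadd_left[OF assms] Bf_commute assms l2_vadd by (metis complex_cnj_add)

lemma Bf_vscale_right:
  assumes "v \<in> l2" "u \<in> l2"
  shows "Bf u (vscale c v) = cnj c * Bf u v"
  using Bf_vscale_left[OF assms, of c] Bf_commute assms l2_vscale by (metis complex_cnj_mult)

lemma Bf_vscale_vscale:
  assumes "u \<in> l2" "v \<in> l2"
  shows "Bf (vscale a u) (vscale b v) = a * cnj b * Bf u v"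
  using Bf_vscale_left[OF assms(1) l2_vscale[OF assms(2)]] Bf_vscale_right[OF assms(2,1)] by simp

lemma Bf_self:
  assumes "v \<in> l2"
  shows "Bf v v = of_real ((cmod (v 0))\<^sup>2 - l2_norm_sq (vtail v))"
proof -
  have "v 0 * cnj (v 0) = of_real ((cmod (v 0))\<^sup>2)"
    by (metis complex_norm_square)
  then show ?thesis
    by (simp only: Bf_eq_head_minus_l2_inner l2_inner_self[OF l2_vtail[OF assms]] of_real_diff)
qed

lemma Re_Bf_self: "v \<in> l2 \<Longrightarrow> Re (Bf v v) = (cmod (v 0))\<^sup>2 - l2_norm_sq (vtail v)"
  by (simp add: Bf_self)

lemma Bf_self_real: "v \<in> l2 \<Longrightarrow> Bf v v = of_real (Re (Bf v v))"
  by (simp add: Bf_self)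

lemma norm_Bf_le:
  assumes "v \<in> l2" "w \<in> l2"
  shows "cmod (Bf v w) \<le> 2 * (sqrt (l2_norm_sq v) * sqrt (l2_norm_sq w))"
proof -
  have parts_le: "cmod (u 0) \<le> sqrt (l2_norm_sq u)" "sqrt (l2_norm_sq (vtail u)) \<le> sqrt (l2_norm_sq u)"
    if "u \<in> l2" for u
    using l2_norm_sq_split_head[OF that] l2_norm_sq_nonneg[OF l2_vtail[OF that]]
    by (auto intro: real_le_rsqrt)
  have "cmod (Bf v w) \<le> cmod (v 0 * cnj (w 0)) + cmod (l2_inner (vtail v) (vtail w))"
    unfolding Bf_eq_head_minus_l2_inner by (rule norm_triangle_ineq4)
  also have "\<dots> \<le> cmod (v 0) * cmod (w 0) + sqrt (l2_norm_sq (vtail v)) * sqrt (l2_norm_sq (vtail w))"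
    using l2_inner_Cauchy_Schwarz[OF l2_vtail[OF assms(1)] l2_vtail[OF assms(2)]] by (simp add: norm_mult)
  also have "\<dots> \<le> sqrt (l2_norm_sq v) * sqrt (l2_norm_sq w) + sqrt (l2_norm_sq v) * sqrt (l2_norm_sq w)"
    using assms by (intro add_mono mult_mono parts_le) (auto simp: l2_norm_sq_nonneg l2_vtail)
  finally show ?thesis
    by simp
qed

lemma tendsto_Bf_0:
  assumes "\<forall>\<^sub>F x in F. w x \<in> l2" "n \<in> l2" "((\<lambda>x. l2_norm_sq (w x)) \<longlongrightarrow> 0) F"
  shows "((\<lambda>x. Bf (w x) n) \<longlongrightarrow> 0) F"
proof (rule Lim_null_comparison)
  show "\<forall>\<^sub>F x in F. norm (Bf (w x) n) \<le> 2 * (sqrt (l2_norm_sq (w x)) * sqrt (l2_norm_sq n))"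
    using assms(1) by eventually_elim (use norm_Bf_le assms(2) in auto)
  have "((\<lambda>x. 2 * (sqrt (l2_norm_sq (w x)) * sqrt (l2_norm_sq n))) \<longlongrightarrow> 2 * (sqrt 0 * sqrt (l2_norm_sq n))) F"
    by (intro tendsto_intros assms(3))
  then show "((\<lambda>x. 2 * (sqrt (l2_norm_sq (w x)) * sqrt (l2_norm_sq n))) \<longlongrightarrow> 0) F"
    by simp
qed

lemma l2_norm_sq_le_if_Bf_orthogonal_timelike:
  assumes "u \<in> l2" "w \<in> l2" "Re (Bf u u) > 0" "Bf w u = 0"
  shows "Re (Bf u u) * l2_norm_sq w \<le> 2 * (cmod (u 0))\<^sup>2 * (- Re (Bf w w))"
proof -
  define a p q U where "a = (cmod (w 0))\<^sup>2" and "p = l2_norm_sq (vtail w)"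
    and "q = l2_norm_sq (vtail u)" and "U = (cmod (u 0))\<^sup>2"
  have b: "Re (Bf u u) = U - q" and bw: "Re (Bf w w) = a - p" and nw: "l2_norm_sq w = a + p"
    using Re_Bf_self[OF assms(1)] Re_Bf_self[OF assms(2)] l2_norm_sq_split_head[OF assms(2)]
    by (simp_all add: a_def p_def q_def U_def)
  have nonneg: "p \<ge> 0" "q \<ge> 0" "a \<ge> 0"
    using assms(1,2) by (simp_all add: p_def q_def a_def l2_norm_sq_nonneg l2_vtail)
  have "w 0 * cnj (u 0) = l2_inner (vtail w) (vtail u)"
    using assms(4) by (simp add: Bf_eq_head_minus_l2_inner)
  then have "cmod (w 0 * cnj (u 0)) \<le> sqrt p * sqrt q"
    using l2_inner_Cauchy_Schwarz[OF l2_vtail l2_vtail] assms(1,2) by (simp add: p_def q_def)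
  then have "(cmod (w 0 * cnj (u 0)))\<^sup>2 \<le> (sqrt p * sqrt q)\<^sup>2"
    by (simp add: power_mono)
  then have aU: "a * U \<le> p * q"
    using nonneg by (simp add: a_def U_def norm_mult power_mult_distrib)
  have "a * U \<le> p * U"
    using aU b assms(3) nonneg mult_left_mono[of q U p] by linarith
  then have "a \<le> p"
    using b assms(3) nonneg by simp
  have "(U - q) * (a + p) \<le> 2 * U * (p - a)"
  proof -
    have "2 * U * (p - a) - (U - q) * (a + p) = (U - q) * p + 2 * q * p - 2 * U * a - a * (U - q)"
      by (simp add: algebra_simps)
    also have "\<dots> \<ge> (U - q) * (p - a)"
      using aU by (simp add: algebra_simps)
    moreover have "(U - q) * (p - a) \<ge> 0"
      using \<open>a \<le> p\<close> b assms(3) by simp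
    ultimately show ?thesis
      by linarith
  qed
  then show ?thesis
    by (simp add: b bw nw U_def)
qed

lemma null_Bf_orthogonal_timelike_eq_vzero:
  assumes "n \<in> l2" "v \<in> l2" "Bf n n = 0" "Re (Bf v v) > 0" "Bf n v = 0"
  shows "n = vzero"
proof -
  have "Re (Bf v v) * l2_norm_sq n \<le> 0"
    using l2_norm_sq_le_if_Bf_orthogonal_timelike[OF assms(2,1,4,5)] assms(3) by simp
  then have "l2_norm_sq n \<le> 0"
    using assms(4) by (simp add: mult_le_0_iff)
  then show ?thesis
    using l2_norm_sq_nonneg[OF assms(1)] l2_norm_sq_eq_0[OF assms(1)] by simp
qed

lemma Re_Bf_e0: "Re (Bf e0 e0) > 0"
  by (simp add: Bf_def e0_def)

lemma Vm_timelike_minus_e0: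
  assumes "v \<in> Vm m"
  obtains y c where "y \<in> Vm m" "Re (Bf y y) > 0" "v = vadd y (vscale (- c) e0)"
proof -
  define c where "c = sqrt (l2_norm_sq (vtail v)) + cmod (v 0) + 1"
  define y where "y = vadd v (vscale (of_real c) e0)"
  have "y \<in> Vm m"
    by (simp add: y_def Vm_vadd Vm_vscale assms e0_Vm)
  have tail_y: "vtail y = vtail v" and y0: "y 0 = v 0 + of_real c"
    by (auto simp: y_def vtail_def vadd_def vscale_def e0_def)
  have tail_nonneg: "l2_norm_sq (vtail v) \<ge> 0"
    by (intro l2_norm_sq_nonneg l2_vtail Vm_l2[OF assms])
  have "c \<ge> 0"
    using tail_nonneg by (simp add: c_def)
  then have "cmod (of_real c + v 0) \<ge> c - cmod (v 0)"
    using norm_diff_ineq[of "of_real c" "v 0"] by simp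
  then have "cmod (y 0) \<ge> c - cmod (v 0)"
    by (simp add: y0 add.commute)
  then have "cmod (y 0) > sqrt (l2_norm_sq (vtail v))"
    by (simp add: c_def)
  then have "(cmod (y 0))\<^sup>2 > (sqrt (l2_norm_sq (vtail v)))\<^sup>2"
    by (rule power_strict_mono) (simp_all add: tail_nonneg)
  then have "Re (Bf y y) > 0"
    using Re_Bf_self[OF Vm_l2[OF \<open>y \<in> Vm m\<close>]] tail_y tail_nonneg by simp
  moreover have "v = vadd y (vscale (- of_real c) e0)"
    by (auto simp: y_def vadd_def vscale_def)
  ultimately show ?thesis
    using that \<open>y \<in> Vm m\<close> by blast
qed

lemma l2_norm_sq_Bf_orthogonal_part_le:
  assumes "u \<in> l2" "u0 \<in> l2" "\<beta> > 0" "Bf u u = of_real \<beta>" "Bf u0 u0 = of_real \<beta>"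
  shows "l2_norm_sq (vadd u (vscale (- (Bf u u0 / \<beta>)) u0))
           \<le> 2 * (cmod (u0 0))\<^sup>2 * ((cmod (Bf u u0) / \<beta>)\<^sup>2 - 1)"
proof -
  define c where "c = Bf u u0 / \<beta>"
  define w where "w = vadd u (vscale (- c) u0)"
  have "w \<in> l2"
    by (simp add: w_def assms l2_vadd l2_vscale)
  have Bf_u_u0: "Bf u u0 = c * of_real \<beta>"
    using assms(3) by (simp add: c_def)
  have "Bf w u0 = 0"
    using Bf_vadd_left[OF assms(1) l2_vscale[OF assms(2)] assms(2)] Bf_vscale_left[OF assms(2,2)]
    by (simp add: w_def Bf_u_u0 assms(5))
  then have "Bf u0 w = 0"
    using Bf_commute[OF \<open>w \<in> l2\<close> assms(2)] by simp
  have "Bf w w = Bf u w + Bf (vscale (- c) u0) w"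
    using Bf_vadd_left[OF assms(1) l2_vscale[OF assms(2), of "- c"] \<open>w \<in> l2\<close>]
    by (simp only: w_def[symmetric])
  also have "Bf (vscale (- c) u0) w = 0"
    by (simp add: Bf_vscale_left[OF assms(2) \<open>w \<in> l2\<close>] \<open>Bf u0 w = 0\<close>)
  also have "Bf u w = of_real \<beta> - (c * cnj c) * of_real \<beta>"
    using Bf_vadd_right[OF assms(1) l2_vscale[OF assms(2)] assms(1)] Bf_vscale_right[OF assms(2,1)]
    by (simp add: w_def assms(4) Bf_u_u0 algebra_simps)
  finally have "Re (Bf w w) = \<beta> - (cmod c)\<^sup>2 * \<beta>"
    by (simp add: complex_norm_square[symmetric])
  then have minus_Bf_w_w: "- Re (Bf w w) = \<beta> * ((cmod c)\<^sup>2 - 1)"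
    by (simp add: algebra_simps)
  have "\<beta> * l2_norm_sq w \<le> 2 * (cmod (u0 0))\<^sup>2 * (- Re (Bf w w))"
    using l2_norm_sq_le_if_Bf_orthogonal_timelike[OF assms(2) \<open>w \<in> l2\<close>] assms(3,5) \<open>Bf w u0 = 0\<close> by simp
  also have "\<dots> = \<beta> * (2 * (cmod (u0 0))\<^sup>2 * ((cmod c)\<^sup>2 - 1))"
    unfolding minus_Bf_w_w by simp
  finally have "l2_norm_sq w \<le> 2 * (cmod (u0 0))\<^sup>2 * ((cmod c)\<^sup>2 - 1)"
    using assms(3) by simp
  then show ?thesis
    using assms(3) by (simp add: w_def c_def norm_divide)
qed

lemma Bf_timelike_reverse_Cauchy_Schwarz:
  assumes "u \<in> l2" "u0 \<in> l2" "\<beta> > 0" "Bf u u = of_real \<beta>" "Bf u0 u0 = of_real \<beta>"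
  shows "\<beta> \<le> cmod (Bf u u0)"
proof -
  have "\<beta> = (cmod (u0 0))\<^sup>2 - l2_norm_sq (vtail u0)"
    using Re_Bf_self[OF assms(2)] assms(5) by simp
  then have "(cmod (u0 0))\<^sup>2 > 0"
    using assms(3) l2_norm_sq_nonneg[OF l2_vtail[OF assms(2)]] by linarith
  moreover have "0 \<le> 2 * (cmod (u0 0))\<^sup>2 * ((cmod (Bf u u0) / \<beta>)\<^sup>2 - 1)"
    using l2_norm_sq_Bf_orthogonal_part_le[OF assms] l2_norm_sq_nonneg assms(1,2)
    by (meson l2_vadd l2_vscale order_trans)
  ultimately have "1\<^sup>2 \<le> (cmod (Bf u u0) / \<beta>)\<^sup>2"
    by (simp add: zero_le_mult_iff)
  then have "1 \<le> cmod (Bf u u0) / \<beta>"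
    by (rule power2_le_imp_le) (use assms(3) in simp)
  then show ?thesis
    using assms(3) by simp
qed

lemma tendsto_1_if_arcosh_tendsto_0:
  fixes f :: "'a \<Rightarrow> real"
  assumes "\<forall>\<^sub>F x in F. f x \<ge> 1" "((\<lambda>x. arcosh (f x)) \<longlongrightarrow> 0) F"
  shows "(f \<longlongrightarrow> 1) F"
proof -
  have "((\<lambda>x. cosh (arcosh (f x))) \<longlongrightarrow> cosh 0) F"
    by (intro tendsto_intros assms(2))
  moreover have "\<forall>\<^sub>F x in F. cosh (arcosh (f x)) = f x"
    using assms(1) by eventually_elim simp
  ultimately show ?thesis
    by (simp add: Lim_transform_eventually)
qed

lemma tendsto_1_if_norm_tendsto_1_and_near_nonneg_reals:
  fixes c :: "'a \<Rightarrow> complex" and r :: "'a \<Rightarrow> real"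
  assumes "((\<lambda>x. cmod (c x)) \<longlongrightarrow> 1) F" "((\<lambda>x. c x - of_real (r x)) \<longlongrightarrow> 0) F"
    and "\<forall>\<^sub>F x in F. r x \<ge> 0"
  shows "(c \<longlongrightarrow> 1) F"
proof -
  have "((\<lambda>x. cmod (c x) - r x) \<longlongrightarrow> 0) F"
  proof (rule Lim_null_comparison)
    show "\<forall>\<^sub>F x in F. norm (cmod (c x) - r x) \<le> cmod (c x - of_real (r x))"
      using assms(3) by eventually_elim (metis abs_of_nonneg norm_of_real norm_triangle_ineq3 real_norm_def)
    show "((\<lambda>x. cmod (c x - of_real (r x))) \<longlongrightarrow> 0) F"
      using tendsto_norm_zero[OF assms(2)] .
  qed
  from tendsto_diff[OF assms(1) this] have "(r \<longlongrightarrow> 1) F"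
    by simp
  then have "((\<lambda>x. of_real (r x) + (c x - of_real (r x))) \<longlongrightarrow> of_real 1 + 0) F"
    by (intro tendsto_intros assms(2))
  then show ?thesis
    by simp
qed

lemma Bf_orthogonal_part_tendsto_0_if_hyperbolic_tendsto_0:
  assumes u: "\<forall>\<^sub>F x in F. u x \<in> l2 \<and> Bf (u x) (u x) = of_real \<beta>"
    and u0: "u0 \<in> l2" "Bf u0 u0 = of_real \<beta>" "\<beta> > 0"
    and hyperbolic: "((\<lambda>x. arcosh (cmod (Bf (u x) u0) / \<beta>)) \<longlongrightarrow> 0) F"
  shows "((\<lambda>x. cmod (Bf (u x) u0 / \<beta>)) \<longlongrightarrow> 1) F"
    and "((\<lambda>x. l2_norm_sq (vadd (u x) (vscale (- (Bf (u x) u0 / \<beta>)) u0))) \<longlongrightarrow> 0) F"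
proof -
  have norm_c: "cmod (Bf (u x) u0 / \<beta>) = cmod (Bf (u x) u0) / \<beta>" for x
    using u0(3) by (simp add: norm_divide)
  show norm_c_tendsto: "((\<lambda>x. cmod (Bf (u x) u0 / \<beta>)) \<longlongrightarrow> 1) F"
    unfolding norm_c
  proof (rule tendsto_1_if_arcosh_tendsto_0[OF _ hyperbolic])
    show "\<forall>\<^sub>F x in F. 1 \<le> cmod (Bf (u x) u0) / \<beta>"
      using u by eventually_elim (use Bf_timelike_reverse_Cauchy_Schwarz u0 in simp)
  qed
  have "((\<lambda>x. 2 * (cmod (u0 0))\<^sup>2 * ((cmod (Bf (u x) u0 / \<beta>))\<^sup>2 - 1))
          \<longlongrightarrow> 2 * (cmod (u0 0))\<^sup>2 * (1\<^sup>2 - 1)) F"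
    by (intro tendsto_intros norm_c_tendsto)
  then have bound_tendsto: "((\<lambda>x. 2 * (cmod (u0 0))\<^sup>2 * ((cmod (Bf (u x) u0 / \<beta>))\<^sup>2 - 1)) \<longlongrightarrow> 0) F"
    by simp
  show "((\<lambda>x. l2_norm_sq (vadd (u x) (vscale (- (Bf (u x) u0 / \<beta>)) u0))) \<longlongrightarrow> 0) F"
  proof (rule Lim_null_comparison[OF _ bound_tendsto])
    show "\<forall>\<^sub>F x in F. norm (l2_norm_sq (vadd (u x) (vscale (- (Bf (u x) u0 / \<beta>)) u0)))
                      \<le> 2 * (cmod (u0 0))\<^sup>2 * ((cmod (Bf (u x) u0 / \<beta>))\<^sup>2 - 1)"
      using u
      by eventually_elim
        (use l2_norm_sq_Bf_orthogonal_part_le[of _ u0 \<beta>] u0 in \<open>simp add: norm_c l2_norm_sq_nonneg l2_vadd l2_vscale\<close>)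
  qed
qed

text \<open>The pinned pairing with the null vector n removes the phase ambiguity of lifts: the
  hyperbolic distance only controls the modulus of c = B(u, u0) / B(u0, u0), while
  B(u, n) r = B(u0, n) r0 with r, r0 > 0 forces c to be close to a positive real.\<close>
lemma l2_tendsto_if_hyperbolic_tendsto_and_null_pairing_pinned:
  fixes u :: "'a \<Rightarrow> cvec" and r :: "'a \<Rightarrow> real" and r0 :: real
  assumes u: "\<forall>\<^sub>F x in F. u x \<in> l2 \<and> Bf (u x) (u x) = of_real \<beta> \<and> r x > 0
                         \<and> Bf (u x) n * of_real (r x) = Bf u0 n * of_real r0"
    and u0: "u0 \<in> l2" "Bf u0 u0 = of_real \<beta>" "\<beta> > 0"
    and n: "n \<in> l2" "Bf u0 n \<noteq> 0" "r0 > 0"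
    and hyperbolic: "((\<lambda>x. arcosh (cmod (Bf (u x) u0) / \<beta>)) \<longlongrightarrow> 0) F"
  shows "((\<lambda>x. l2_norm_sq (vdiff (u x) u0)) \<longlongrightarrow> 0) F"
proof -
  define c where "c x = Bf (u x) u0 / \<beta>" for x
  define w where "w x = vadd (u x) (vscale (- c x) u0)" for x
  have u': "\<forall>\<^sub>F x in F. u x \<in> l2 \<and> Bf (u x) (u x) = of_real \<beta>"
    using u by (rule eventually_mono) simp
  have w_l2: "\<forall>\<^sub>F x in F. w x \<in> l2"
    using u' by eventually_elim (simp add: w_def l2_vadd l2_vscale u0)
  have norm_c_tendsto: "((\<lambda>x. cmod (c x)) \<longlongrightarrow> 1) F" and w_tendsto: "((\<lambda>x. l2_norm_sq (w x)) \<longlongrightarrow> 0) F"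
    using Bf_orthogonal_part_tendsto_0_if_hyperbolic_tendsto_0[OF u' u0 hyperbolic]
    by (simp_all add: c_def w_def)
  have "\<forall>\<^sub>F x in F. c x - of_real (r0 / r x) = - Bf (w x) n / Bf u0 n"
    using u
  proof eventually_elim
    case (elim x)
    then have "Bf (w x) n = Bf (u x) n - c x * Bf u0 n"
      using Bf_vadd_left[OF _ l2_vscale[OF u0(1)] n(1)] Bf_vscale_left[OF u0(1) n(1)] by (simp add: w_def)
    also have "Bf (u x) n = Bf u0 n * r0 / r x"
      using elim by (simp add: field_simps)
    finally show ?case
      using n(2) elim by (simp add: field_simps)
  qed
  moreover have "((\<lambda>x. - Bf (w x) n / Bf u0 n) \<longlongrightarrow> - 0 / Bf u0 n) F"
    by (intro tendsto_intros tendsto_Bf_0 w_l2 n(1,2) w_tendsto)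
  ultimately have c_near_real: "((\<lambda>x. c x - of_real (r0 / r x)) \<longlongrightarrow> 0) F"
    by (simp add: Lim_transform_eventually eventually_mono[OF _ sym])
  have "\<forall>\<^sub>F x in F. r0 / r x \<ge> 0"
    using u by eventually_elim (use n(3) in simp)
  then have "(c \<longlongrightarrow> 1) F"
    by (rule tendsto_1_if_norm_tendsto_1_and_near_nonneg_reals[OF norm_c_tendsto c_near_real])
  then have "((\<lambda>x. (cmod (c x - 1))\<^sup>2 * l2_norm_sq u0) \<longlongrightarrow> (cmod (1 - 1))\<^sup>2 * l2_norm_sq u0) F"
    by (intro tendsto_intros)
  then have "((\<lambda>x. l2_norm_sq (vscale (c x - 1) u0)) \<longlongrightarrow> 0) F"
    by (simp add: l2_norm_sq_vscale u0(1))
  then have "((\<lambda>x. l2_norm_sq (vadd (w x) (vscale (c x - 1) u0))) \<longlongrightarrow> 0) F"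
    using w_l2 u0(1) by (intro tendsto_l2_norm_sq_vadd_0 w_tendsto) (auto elim: eventually_mono simp: l2_vscale)
  moreover have "vadd (w x) (vscale (c x - 1) u0) = vdiff (u x) u0" for x
    by (auto simp: w_def vadd_def vscale_def vdiff_def algebra_simps)
  ultimately show ?thesis
    by simp
qed

lemma in_cline_iff: "x \<in> cline v \<longleftrightarrow> (\<exists>c. x = vscale c v)"
  by (auto simp: cline_def)

lemma in_cline: "v \<in> cline v"
  by (metis in_cline_iff vscale_one)

lemma cline_vscale:
  assumes "c \<noteq> 0"
  shows "cline (vscale c v) = cline v"
proof
  show "cline (vscale c v) \<subseteq> cline v"
    by (auto simp: cline_def vscale_vscale)
  show "cline v \<subseteq> cline (vscale c v)"
  proof
    fix x assume "x \<in> cline v"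
    then obtain d where "x = vscale d v"
      by (auto simp: in_cline_iff)
    then have "x = vscale (d / c) (vscale c v)"
      using assms by (simp add: vscale_vscale)
    then show "x \<in> cline (vscale c v)"
      by (auto simp: in_cline_iff)
  qed
qed

lemma image_cline: "(\<And>c. A (vscale c v) = vscale c (A v)) \<Longrightarrow> A ` cline v = cline (A v)"
  by (auto simp: cline_def image_iff)

lemma some_nonzero_in_cline:
  assumes "v \<noteq> vzero"
  obtains c where "c \<noteq> 0" "(SOME w. w \<in> cline v \<and> w \<noteq> vzero) = vscale c v"
proof -
  have "(SOME w. w \<in> cline v \<and> w \<noteq> vzero) \<in> cline v \<and> (SOME w. w \<in> cline v \<and> w \<noteq> vzero) \<noteq> vzero"
    by (rule someI[of _ v]) (use assms in_cline in auto)
  then obtain c where "(SOME w. w \<in> cline v \<and> w \<noteq> vzero) = vscale c v" "vscale c v \<noteq> vzero"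
    by (auto simp: in_cline_iff)
  moreover have "c \<noteq> 0"
    using calculation(2) vscale_zero by auto
  ultimately show ?thesis
    using that by blast
qed

lemma hdist_cline:
  assumes "v \<in> l2" "w \<in> l2" "v \<noteq> vzero" "w \<noteq> vzero"
  shows "hdist (cline v) (cline w) = arcosh (cmod (Bf v w) / sqrt (Re (Bf v v) * Re (Bf w w)))"
proof -
  obtain a where a: "a \<noteq> 0" "(SOME x. x \<in> cline v \<and> x \<noteq> vzero) = vscale a v"
    using some_nonzero_in_cline[OF assms(3)] .
  obtain b where b: "b \<noteq> 0" "(SOME x. x \<in> cline w \<and> x \<noteq> vzero) = vscale b w"
    using some_nonzero_in_cline[OF assms(4)] .
  have Re_scaled: "Re (c * cnj c * Bf x x) = (cmod c)\<^sup>2 * Re (Bf x x)" for c x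
  proof -
    have "c * cnj c = of_real ((cmod c)\<^sup>2)"
      by (metis complex_norm_square)
    then show ?thesis
      by (simp del: of_real_power)
  qed
  have "sqrt ((cmod a)\<^sup>2 * Re (Bf v v) * ((cmod b)\<^sup>2 * Re (Bf w w)))
        = (cmod a * cmod b) * sqrt (Re (Bf v v) * Re (Bf w w))"
    by (simp add: real_sqrt_mult power_mult_distrib algebra_simps)
  moreover have "cmod (a * cnj b * Bf v w) = (cmod a * cmod b) * cmod (Bf v w)"
    by (simp add: norm_mult)
  moreover have "cmod a * cmod b > 0"
    using a b by simp
  ultimately show ?thesis
    unfolding hdist_def Let_def a(2) b(2) Bf_vscale_vscale[OF assms(1,2)] Bf_vscale_vscale[OF assms(1,1)]
      Bf_vscale_vscale[OF assms(2,2)] Re_scaled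
    using a(1) b(1) by simp
qed

definition B_isometry :: "enat \<Rightarrow> (cvec \<Rightarrow> cvec) \<Rightarrow> bool" where
  "B_isometry m A \<longleftrightarrow> (\<forall>v\<in>Vm m. A v \<in> Vm m)
      \<and> (\<forall>v\<in>Vm m. \<forall>w\<in>Vm m. A (vadd v w) = vadd (A v) (A w))
      \<and> (\<forall>c. \<forall>v\<in>Vm m. A (vscale c v) = vscale c (A v))
      \<and> (\<forall>v\<in>Vm m. \<forall>w\<in>Vm m. Bf (A v) (A w) = Bf v w)"

lemma B_isometryD:
  assumes "B_isometry m A" "v \<in> Vm m" "w \<in> Vm m"
  shows "A v \<in> Vm m" "A (vadd v w) = vadd (A v) (A w)" "A (vscale c v) = vscale c (A v)"
    "Bf (A v) (A w) = Bf v w"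
  using assms by (simp_all add: B_isometry_def)

lemma Ugrp_B_isometry: "A \<in> Ugrp m \<Longrightarrow> B_isometry m A"
  by (auto simp: Ugrp_def B_isometry_def bij_betw_def)

lemma B_isometry_comp: "B_isometry m A \<Longrightarrow> B_isometry m B \<Longrightarrow> B_isometry m (A \<circ> B)"
  by (simp add: B_isometry_def)

lemma B_isometry_image_cline: "B_isometry m A \<Longrightarrow> v \<in> Vm m \<Longrightarrow> A ` cline v = cline (A v)"
  by (rule image_cline) (simp add: B_isometry_def)

lemma B_isometry_eq_if_eq_on_timelike:
  assumes "B_isometry m C" "B_isometry m D"
    and "\<And>v. v \<in> Vm m \<Longrightarrow> Re (Bf v v) > 0 \<Longrightarrow> C v = D v"
  shows "\<forall>v\<in>Vm m. C v = D v"
proof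
  fix v assume "v \<in> Vm m"
  then obtain y c where y: "y \<in> Vm m" "Re (Bf y y) > 0" "v = vadd y (vscale (- c) e0)"
    by (rule Vm_timelike_minus_e0)
  have "C e0 = D e0" "C y = D y"
    using assms(3) e0_Vm Re_Bf_e0 y by blast+
  then show "C v = D v"
    using B_isometryD[OF assms(1)] B_isometryD[OF assms(2)] y(1,3) e0_Vm[of m] Vm_vscale[OF e0_Vm[of m]]
    by simp
qed

text \<open>Two lifts of the same projective map differ by a unimodular scalar; if both have a
  positive eigenvalue on a null vector n, pairing a timelike vector with n shows the scalar is 1.\<close>
lemma B_isometry_eq_if_same_lines_and_positive_on_null:
  assumes C: "B_isometry m C" and D: "B_isometry m D"
    and n: "n \<in> Vm m" "n \<noteq> vzero" "Bf n n = 0"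
    and same_lines: "\<forall>p\<in>hyp m. C ` p = D ` p"
    and Cn: "C n = vscale (of_real r) n" and Dn: "D n = vscale (of_real s) n"
    and "r > 0" "s > 0"
  shows "\<forall>v\<in>Vm m. C v = D v"
proof (rule B_isometry_eq_if_eq_on_timelike[OF C D])
  fix v assume v: "v \<in> Vm m" "Re (Bf v v) > 0"
  have l2: "v \<in> l2" "n \<in> l2" "D v \<in> l2"
    using v(1) n(1) B_isometryD(1)[OF D v(1) v(1)] by (simp_all add: Vm_l2)
  have "cline v \<in> hyp m"
    using v by (auto simp: hyp_def)
  then have "C v \<in> D ` cline v"
    using same_lines in_cline by blast
  then obtain a where a: "C v = vscale a (D v)"
    using B_isometryD(3)[OF D v(1) v(1)] by (auto simp: in_cline_iff)
  have "Bf v n \<noteq> 0"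
    using null_Bf_orthogonal_timelike_eq_vzero[OF l2(2,1) n(3) v(2)] Bf_commute[OF l2(1,2)] n(2) by auto
  have pair_C: "a * r * Bf (D v) n = Bf v n" and pair_D: "s * Bf (D v) n = Bf v n"
    using B_isometryD(4)[OF C v(1) n(1)] B_isometryD(4)[OF D v(1) n(1)]
    by (simp_all add: a Cn Dn Bf_vscale_vscale[OF l2(3,2)] Bf_vscale_right[OF l2(2,3)])
  then have "a * r = s"
    using \<open>Bf v n \<noteq> 0\<close> by (metis mult_cancel_right mult_eq_0_iff)
  then have "a = of_real (s / r)"
    using \<open>r > 0\<close> by (simp add: field_simps)
  have "Bf v v \<noteq> 0"
    using v(2) by auto
  moreover have "a * cnj a * Bf v v = Bf v v"
    using B_isometryD(4)[OF C v(1) v(1)] B_isometryD(4)[OF D v(1) v(1)]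
    by (simp add: a Bf_vscale_vscale[OF l2(3,3)])
  ultimately have "a * cnj a = 1"
    by simp
  then have "(s / r)\<^sup>2 = 1\<^sup>2"
    by (simp add: \<open>a = of_real (s / r)\<close> power2_eq_square flip: of_real_mult)
  then have "s / r = 1"
    by (rule power2_eq_imp_eq) (use \<open>r > 0\<close> \<open>s > 0\<close> in simp_all)
  then have "a = 1"
    using \<open>a = of_real (s / r)\<close> by simp
  then show "C v = D v"
    by (simp add: a vscale_one)
qed

lemma Ugrp_vscale_unimodular:
  assumes "A \<in> Ugrp m" "cmod k = 1"
  shows "(\<lambda>v. vscale k (A v)) \<in> Ugrp m"
proof -
  have "k \<noteq> 0" "k * cnj k = 1"
    using assms(2) by (auto simp: complex_norm_square[symmetric])
  have "bij_betw (vscale k) (Vm m) (Vm m)"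
    by (rule bij_betw_byWitness[where f' = "vscale (1 / k)"])
      (use \<open>k \<noteq> 0\<close> in \<open>auto simp: vscale_vscale vscale_one Vm_vscale\<close>)
  with assms(1) have "bij_betw (vscale k \<circ> A) (Vm m) (Vm m)"
    by (auto simp: Ugrp_def intro: bij_betw_trans)
  moreover have "B_isometry m A"
    using Ugrp_B_isometry[OF assms(1)] .
  moreover have "Bf (vscale k (A v)) (vscale k (A w)) = Bf v w" if "v \<in> Vm m" "w \<in> Vm m" for v w
  proof -
    have "A v \<in> l2" "A w \<in> l2" "Bf (A v) (A w) = Bf v w"
      using B_isometryD[OF \<open>B_isometry m A\<close> that] B_isometryD(1)[OF \<open>B_isometry m A\<close> that(2,2)]
      by (auto simp: Vm_l2)
    then show ?thesis
      by (simp add: Bf_vscale_vscale \<open>k * cnj k = 1\<close>)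
  qed
  ultimately show ?thesis
    by (auto simp: Ugrp_def comp_def B_isometryD vscale_vadd vscale_vscale mult.commute)
qed

lemma Ugrp_eigenvector_if_fixes_cline:
  assumes "A \<in> Ugrp m" "v \<in> Vm m" "v \<noteq> vzero" "A ` cline v = cline v"
  obtains c where "c \<noteq> 0" "A v = vscale c v"
proof -
  have "A v \<in> cline v"
    using assms(4) in_cline[of v] by blast
  then obtain c where c: "A v = vscale c v"
    by (auto simp: in_cline_iff)
  have "A vzero = vzero"
    using B_isometryD(3)[OF Ugrp_B_isometry[OF assms(1)] assms(2) assms(2), of 0] by (simp add: vscale_zero)
  moreover have "inj_on A (Vm m)"
    using assms(1) by (simp add: Ugrp_def bij_betw_def)
  ultimately have "c \<noteq> 0"
    using c assms(2,3) vzero_Vm[of m] by (metis inj_onD vscale_zero)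
  then show ?thesis
    using that c by blast
qed

locale boundary_fixing_rep =
  fixes G :: "('g, 'b) monoid_scheme" and T :: "'g topology" and m :: enat
    and \<rho> :: "'g \<Rightarrow> cvec set \<Rightarrow> cvec set" and n :: cvec
  assumes topological_group: "topological_group G T"
    and rep: "is_rep G T m \<rho>"
    and n_Vm: "n \<in> Vm m" and n_nonzero: "n \<noteq> vzero" and n_null: "Bf n n = 0"
    and fixes_cline_n: "g \<in> carrier G \<Longrightarrow> \<rho> g (cline n) = cline n"
begin

lemma topspace_eq_carrier: "topspace T = carrier G"
  using topological_group by (simp add: topological_group_def)

lemma mult_closed: "g \<in> carrier G \<Longrightarrow> h \<in> carrier G \<Longrightarrow> g \<otimes>\<^bsub>G\<^esub> h \<in> carrier G"
  using topological_group by (simp add: topological_group_def group.is_monoid monoid.m_closed)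

lemma eventually_in_carrier: "g0 \<in> carrier G \<Longrightarrow> \<forall>\<^sub>F g in nhdsin T g0. g \<in> carrier G"
  by (auto simp: eventually_nhdsin topspace_eq_carrier intro!: exI[of _ "topspace T"])

lemma rep_mult:
  "g \<in> carrier G \<Longrightarrow> h \<in> carrier G \<Longrightarrow> p \<in> hyp m \<union> bdry m \<Longrightarrow> \<rho> (g \<otimes>\<^bsub>G\<^esub> h) p = \<rho> g (\<rho> h p)"
  using rep by (simp add: is_rep_def)

lemma n_l2: "n \<in> l2"
  using n_Vm by (rule Vm_l2)

definition normalized_lift :: "'g \<Rightarrow> (cvec \<Rightarrow> cvec) \<Rightarrow> bool" where
  "normalized_lift g C \<longleftrightarrow> C \<in> Ugrp m \<and> (\<forall>p\<in>hyp m \<union> bdry m. C ` p = \<rho> g p)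
     \<and> (\<exists>r>0. C n = vscale (of_real r) n)"

lemma normalized_lift_exists:
  assumes "g \<in> carrier G"
  shows "\<exists>C. normalized_lift g C"
proof -
  obtain A where A: "A \<in> Ugrp m" "\<forall>p\<in>hyp m \<union> bdry m. \<rho> g p = A ` p"
    using rep assms by (auto simp: is_rep_def PUgrp_def)
  have "cline n \<in> bdry m"
    using n_Vm n_nonzero n_null by (auto simp: bdry_def)
  then have "A ` cline n = cline n"
    using A(2) fixes_cline_n[OF assms] by auto
  then obtain c where "c \<noteq> 0" "A n = vscale c n"
    using Ugrp_eigenvector_if_fixes_cline[OF A(1) n_Vm n_nonzero] by blast
  define k where "k = of_real (cmod c) / c"
  have "cmod k = 1" "k \<noteq> 0"
    using \<open>c \<noteq> 0\<close> by (simp_all add: k_def norm_divide)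
  define C where "C v = vscale k (A v)" for v
  have "C \<in> Ugrp m"
    unfolding C_def using Ugrp_vscale_unimodular[OF A(1) \<open>cmod k = 1\<close>] .
  moreover have "C ` p = \<rho> g p" if p: "p \<in> hyp m \<union> bdry m" for p
  proof -
    obtain v where "p = cline v" "v \<in> Vm m"
      using p unfolding hyp_def bdry_def by blast
    then show ?thesis
      using A(2) p \<open>k \<noteq> 0\<close> B_isometry_image_cline[OF Ugrp_B_isometry[OF \<open>C \<in> Ugrp m\<close>]]
        B_isometry_image_cline[OF Ugrp_B_isometry[OF A(1)]]
      by (simp add: C_def cline_vscale)
  qed
  moreover have "C n = vscale (of_real (cmod c)) n" "cmod c > 0"
    using \<open>c \<noteq> 0\<close> by (simp_all add: C_def \<open>A n = vscale c n\<close> vscale_vscale k_def)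
  ultimately show ?thesis
    unfolding normalized_lift_def by blast
qed

definition lift :: "'g \<Rightarrow> cvec \<Rightarrow> cvec" where
  "lift g = (SOME C. normalized_lift g C)"

lemma normalized_lift_lift: "g \<in> carrier G \<Longrightarrow> normalized_lift g (lift g)"
  unfolding lift_def by (rule someI_ex[OF normalized_lift_exists])

lemma lift_Ugrp: "g \<in> carrier G \<Longrightarrow> lift g \<in> Ugrp m"
  using normalized_lift_lift by (simp add: normalized_lift_def)

lemma lift_B_isometry: "g \<in> carrier G \<Longrightarrow> B_isometry m (lift g)"
  by (rule Ugrp_B_isometry[OF lift_Ugrp])

lemma lift_image: "g \<in> carrier G \<Longrightarrow> p \<in> hyp m \<union> bdry m \<Longrightarrow> lift g ` p = \<rho> g p"
  using normalized_lift_lift by (simp add: normalized_lift_def)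

definition lift_factor :: "'g \<Rightarrow> real" where
  "lift_factor g = (SOME r. r > 0 \<and> lift g n = vscale (of_real r) n)"

lemma lift_factor:
  assumes "g \<in> carrier G"
  shows "lift_factor g > 0" "lift g n = vscale (of_real (lift_factor g)) n"
proof -
  have "\<exists>r. r > 0 \<and> lift g n = vscale (of_real r) n"
    using normalized_lift_lift[OF assms] by (simp add: normalized_lift_def)
  then show "lift_factor g > 0" "lift g n = vscale (of_real (lift_factor g)) n"
    unfolding lift_factor_def by (metis (mono_tags, lifting) someI_ex)+
qed

lemma rep_hyp:
  assumes "g \<in> carrier G" "p \<in> hyp m"
  shows "\<rho> g p \<in> hyp m"
proof -
  obtain v where v: "p = cline v" "v \<in> Vm m" "Re (Bf v v) > 0"
    using assms(2) by (auto simp: hyp_def)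
  have "\<rho> g p = cline (lift g v)"
    using lift_image[OF assms(1)] assms(2) B_isometry_image_cline[OF lift_B_isometry[OF assms(1)] v(2)] v(1)
    by simp
  then show ?thesis
    using B_isometryD[OF lift_B_isometry[OF assms(1)] v(2) v(2)] v(3) by (auto simp: hyp_def)
qed

lemma lift_mult:
  assumes g: "g \<in> carrier G" and h: "h \<in> carrier G"
  shows "\<forall>v\<in>Vm m. lift (g \<otimes>\<^bsub>G\<^esub> h) v = lift g (lift h v)"
proof -
  have gh: "g \<otimes>\<^bsub>G\<^esub> h \<in> carrier G"
    using mult_closed[OF g h] .
  have same_lines: "\<forall>p\<in>hyp m. lift (g \<otimes>\<^bsub>G\<^esub> h) ` p = (lift g \<circ> lift h) ` p"
  proof
    fix p assume "p \<in> hyp m"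
    have "lift (g \<otimes>\<^bsub>G\<^esub> h) ` p = \<rho> g (\<rho> h p)"
      using lift_image[OF gh] rep_mult[OF g h] \<open>p \<in> hyp m\<close> by simp
    also have "\<dots> = lift g ` lift h ` p"
      using lift_image[OF g] lift_image[OF h] rep_hyp[OF h \<open>p \<in> hyp m\<close>] \<open>p \<in> hyp m\<close> by simp
    finally show "lift (g \<otimes>\<^bsub>G\<^esub> h) ` p = (lift g \<circ> lift h) ` p"
      by (simp add: image_comp)
  qed
  have comp_n: "(lift g \<circ> lift h) n = vscale (of_real (lift_factor h * lift_factor g)) n"
    using lift_factor[OF g] lift_factor[OF h] B_isometryD(3)[OF lift_B_isometry[OF g] n_Vm n_Vm]
    by (simp add: vscale_vscale mult.commute)
  have "lift_factor h * lift_factor g > 0"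
    using lift_factor(1)[OF g] lift_factor(1)[OF h] by simp
  then show ?thesis
    using B_isometry_eq_if_same_lines_and_positive_on_null[OF lift_B_isometry[OF gh]
        B_isometry_comp[OF lift_B_isometry[OF g] lift_B_isometry[OF h]] n_Vm n_nonzero n_null same_lines
        lift_factor(2)[OF gh] comp_n lift_factor(1)[OF gh]]
    by simp
qed

lemma Bf_lift_n:
  assumes "g \<in> carrier G" "y \<in> Vm m"
  shows "Bf (lift g y) n * of_real (lift_factor g) = Bf y n"
proof -
  have "Bf (lift g y) (lift g n) = Bf y n"
    using B_isometryD(4)[OF lift_B_isometry[OF assms(1)] assms(2) n_Vm] .
  then show ?thesis
    using lift_factor[OF assms(1)] Bf_vscale_right[OF n_l2 Vm_l2[OF B_isometryD(1)[OF lift_B_isometry[OF assms(1)] assms(2,2)]]]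
    by (simp add: mult.commute)
qed

lemma hdist_lift:
  assumes "g \<in> carrier G" "g0 \<in> carrier G" "y \<in> Vm m" "Re (Bf y y) > 0"
  shows "hdist (\<rho> g (cline y)) (\<rho> g0 (cline y)) = arcosh (cmod (Bf (lift g y) (lift g0 y)) / Re (Bf y y))"
proof -
  have "cline y \<in> hyp m"
    using assms(3,4) by (auto simp: hyp_def)
  have lift_y: "\<rho> k (cline y) = cline (lift k y)" "lift k y \<in> l2" "Bf (lift k y) (lift k y) = Bf y y"
    if "k \<in> carrier G" for k
    using lift_image[OF that] \<open>cline y \<in> hyp m\<close> B_isometry_image_cline[OF lift_B_isometry[OF that] assms(3)]
      B_isometryD[OF lift_B_isometry[OF that] assms(3,3)]
    by (auto simp: Vm_l2)
  have lift_y_nonzero: "lift k y \<noteq> vzero" if "k \<in> carrier G" for k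
  proof
    assume "lift k y = vzero"
    moreover have "Bf vzero vzero = 0"
      by (simp add: Bf_def vzero_def)
    ultimately show False
      using lift_y(3)[OF that] assms(4) by simp
  qed
  have "sqrt (Re (Bf y y) * Re (Bf y y)) = Re (Bf y y)"
    using assms(4) by simp
  then show ?thesis
    using hdist_cline[OF lift_y(2)[OF assms(1)] lift_y(2)[OF assms(2)] lift_y_nonzero[OF assms(1)]
        lift_y_nonzero[OF assms(2)]]
    by (simp add: lift_y(1,3) assms(1,2))
qed

lemma arcosh_lift_tendsto_0:
  assumes g0: "g0 \<in> carrier G" and y: "y \<in> Vm m" "Re (Bf y y) > 0"
  shows "((\<lambda>g. arcosh (cmod (Bf (lift g y) (lift g0 y)) / Re (Bf y y))) \<longlongrightarrow> 0) (nhdsin T g0)"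
proof (rule tendstoI)
  fix e :: real assume "e > 0"
  have "cline y \<in> hyp m"
    using y by (auto simp: hyp_def)
  then obtain U where U: "openin T U" "g0 \<in> U" "\<forall>g\<in>U. hdist (\<rho> g (cline y)) (\<rho> g0 (cline y)) < e"
    using rep g0 \<open>e > 0\<close> unfolding is_rep_def by blast
  have "dist (arcosh (cmod (Bf (lift g y) (lift g0 y)) / Re (Bf y y))) 0 < e" if "g \<in> U" for g
  proof -
    have g: "g \<in> carrier G"
      using openin_subset[OF U(1)] that by (auto simp: topspace_eq_carrier)
    have l2: "lift k y \<in> l2" and Bf_self_lift: "Bf (lift k y) (lift k y) = of_real (Re (Bf y y))"
      if "k \<in> carrier G" for k
      using B_isometryD[OF lift_B_isometry[OF that] y(1) y(1)] Bf_self_real[OF Vm_l2[OF y(1)]]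
      by (simp_all add: Vm_l2)
    have "1 \<le> cmod (Bf (lift g y) (lift g0 y)) / Re (Bf y y)"
      using Bf_timelike_reverse_Cauchy_Schwarz[OF l2[OF g] l2[OF g0] y(2) Bf_self_lift[OF g] Bf_self_lift[OF g0]]
        y(2) by simp
    moreover have "arcosh (cmod (Bf (lift g y) (lift g0 y)) / Re (Bf y y)) < e"
      using U(3) that hdist_lift[OF g g0 y] by auto
    ultimately show ?thesis
      by (simp add: dist_real_def)
  qed
  then show "\<forall>\<^sub>F g in nhdsin T g0. dist (arcosh (cmod (Bf (lift g y) (lift g0 y)) / Re (Bf y y))) 0 < e"
    using U(1,2) by (auto simp: eventually_nhdsin)
qed

lemma lift_tendsto_timelike:
  assumes g0: "g0 \<in> carrier G" and y: "y \<in> Vm m" "Re (Bf y y) > 0"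
  shows "((\<lambda>g. l2_norm_sq (vdiff (lift g y) (lift g0 y))) \<longlongrightarrow> 0) (nhdsin T g0)"
proof (rule l2_tendsto_if_hyperbolic_tendsto_and_null_pairing_pinned)
  have lift_y: "lift k y \<in> l2" "Bf (lift k y) (lift k y) = of_real (Re (Bf y y))"
    if "k \<in> carrier G" for k
    using B_isometryD[OF lift_B_isometry[OF that] y(1) y(1)] Bf_self_real[OF Vm_l2[OF y(1)]]
    by (simp_all add: Vm_l2)
  show "\<forall>\<^sub>F g in nhdsin T g0. lift g y \<in> l2 \<and> Bf (lift g y) (lift g y) = of_real (Re (Bf y y))
      \<and> lift_factor g > 0 \<and> Bf (lift g y) n * of_real (lift_factor g) = Bf (lift g0 y) n * of_real (lift_factor g0)"
    using eventually_in_carrier[OF g0]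
    by eventually_elim (simp add: lift_y lift_factor(1) Bf_lift_n g0 y(1))
  show "lift g0 y \<in> l2" "Bf (lift g0 y) (lift g0 y) = of_real (Re (Bf y y))"
    using lift_y[OF g0] .
  have "Bf y n \<noteq> 0"
    using null_Bf_orthogonal_timelike_eq_vzero[OF n_l2 Vm_l2[OF y(1)] n_null y(2)] n_nonzero
      Bf_commute[OF Vm_l2[OF y(1)] n_l2] by auto
  then show "Bf (lift g0 y) n \<noteq> 0"
    using Bf_lift_n[OF g0 y(1)] by auto
qed (use assms n_l2 lift_factor(1) arcosh_lift_tendsto_0 in auto)

lemma lift_tendsto:
  assumes g0: "g0 \<in> carrier G" and v: "v \<in> Vm m"
  shows "((\<lambda>g. l2_norm_sq (vdiff (lift g v) (lift g0 v))) \<longlongrightarrow> 0) (nhdsin T g0)"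
proof -
  obtain y c where y: "y \<in> Vm m" "Re (Bf y y) > 0" "v = vadd y (vscale (- c) e0)"
    using Vm_timelike_minus_e0[OF v] .
  define dy de where "dy g = vdiff (lift g y) (lift g0 y)" and "de g = vdiff (lift g e0) (lift g0 e0)" for g
  have lift_v: "lift k v = vadd (lift k y) (vscale (- c) (lift k e0))" if "k \<in> carrier G" for k
    using B_isometryD(2)[OF lift_B_isometry[OF that] y(1) Vm_vscale[OF e0_Vm]]
      B_isometryD(3)[OF lift_B_isometry[OF that] e0_Vm e0_Vm]
    by (simp add: y(3))
  have "vdiff (lift g v) (lift g0 v) = vadd (dy g) (vscale (- c) (de g))" if "g \<in> carrier G" for g
    by (simp add: lift_v that g0 dy_def de_def vdiff_def vadd_def vscale_def algebra_simps)
  moreover have l2: "dy g \<in> l2" "de g \<in> l2" if "g \<in> carrier G" for g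
    using B_isometryD(1)[OF lift_B_isometry[OF that] y(1) y(1)] B_isometryD(1)[OF lift_B_isometry[OF g0] y(1) y(1)]
      B_isometryD(1)[OF lift_B_isometry[OF that] e0_Vm e0_Vm] B_isometryD(1)[OF lift_B_isometry[OF g0] e0_Vm e0_Vm]
    by (simp_all add: dy_def de_def l2_vdiff Vm_l2)
  moreover have "((\<lambda>g. l2_norm_sq (vadd (dy g) (vscale (- c) (de g)))) \<longlongrightarrow> 0) (nhdsin T g0)"
  proof (rule tendsto_l2_norm_sq_vadd_0)
    show "\<forall>\<^sub>F g in nhdsin T g0. dy g \<in> l2 \<and> vscale (- c) (de g) \<in> l2"
      using eventually_in_carrier[OF g0] by eventually_elim (simp add: l2 l2_vscale)
    show "((\<lambda>g. l2_norm_sq (dy g)) \<longlongrightarrow> 0) (nhdsin T g0)"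
      unfolding dy_def by (rule lift_tendsto_timelike[OF g0 y(1,2)])
    have "((\<lambda>g. (cmod (- c))\<^sup>2 * l2_norm_sq (de g)) \<longlongrightarrow> (cmod (- c))\<^sup>2 * 0) (nhdsin T g0)"
      unfolding de_def by (intro tendsto_intros lift_tendsto_timelike[OF g0 e0_Vm Re_Bf_e0])
    then show "((\<lambda>g. l2_norm_sq (vscale (- c) (de g))) \<longlongrightarrow> 0) (nhdsin T g0)"
      using eventually_in_carrier[OF g0]
      by (simp add: Lim_transform_eventually eventually_mono l2 l2_norm_sq_vscale)
  qed
  ultimately show ?thesis
    using eventually_in_carrier[OF g0] by (simp add: Lim_transform_eventually eventually_mono)
qed

lemma lift_orbitally_continuous:
  assumes "v \<in> Vm m" "g0 \<in> carrier G" "e > 0"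
  shows "\<exists>U. openin T U \<and> g0 \<in> U \<and> (\<forall>g\<in>U. l2dist (lift g v) (lift g0 v) < e)"
proof -
  have "((\<lambda>g. l2dist (lift g v) (lift g0 v)) \<longlongrightarrow> sqrt 0) (nhdsin T g0)"
    unfolding l2dist_eq_sqrt_l2_norm_sq by (intro tendsto_real_sqrt lift_tendsto assms)
  then have "\<forall>\<^sub>F g in nhdsin T g0. l2dist (lift g v) (lift g0 v) < e"
    using assms(3) by (simp add: order_tendstoD(2))
  then show ?thesis
    using assms(2) by (simp add: eventually_nhdsin topspace_eq_carrier)
qed

lemma is_lift_lift: "is_lift G T m \<rho> lift"
  using lift_Ugrp lift_image lift_mult lift_orbitally_continuous by (simp add: is_lift_def)

end

theorem mainTheorem7:
  fixes G :: "('g, 'b) monoid_scheme" and T :: "'g topology" and m :: enat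
    and \<rho> :: "'g \<Rightarrow> cvec set \<Rightarrow> cvec set"
  assumes "topological_group G T"
    and "is_rep G T m \<rho>"
    and "\<exists>x\<in>hyp m. total m {\<rho> g x | g. g \<in> carrier G}"
    and "\<exists>\<xi>\<in>bdry m. \<forall>g\<in>carrier G. \<rho> g \<xi> = \<xi>"
  shows "\<exists>\<rho>'. is_lift G T m \<rho> \<rho>'"
proof -
  obtain n where "n \<in> Vm m" "n \<noteq> vzero" "Bf n n = 0" "\<forall>g\<in>carrier G. \<rho> g (cline n) = cline n"
    using assms(4) by (auto simp: bdry_def)
  then interpret boundary_fixing_rep G T m \<rho> n
    using assms(1,2) by unfold_locales simp_all
  show ?thesis
    using is_lift_lift by blast
qed

end
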